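(* Assume $M$ has genus zero and $a+b\neq1$. Then the marginal law of $\omega$ under $\mathbf P$ is $$\mathbf P(\omega)\propto q^{k(\omega)}\Big(\frac{1-(1-q')a-b}{b}\Big)^{|\omega|}Z_{(\mathsf V,\omega),q'}\Big(\frac{q'a}{1-a-b}\Big),\qquad\omega\subseteq\mathsf E.$$
   Context: $M$ is the sphere or the plane. Let $\mathsf G=(\mathsf V,\mathsf E)$ be a finite connected graph embedded in $M$ with all faces topological discs, and $\mathsf G^*=(\mathsf U,\mathsf E^* )$ its embedded dual ($\mathsf U$ = faces of $\mathsf G$); $e^*$ is the dual edge crossing $e$, $\xi^*=\{e^*:e\in\xi\}$. Fix integers $q,q'\ge1$, finite $Q,Q'\subset\mathbb C$ with $Q=-Q$, $Q'=-Q'$, $|Q|=q$, $|Q'|=q'$, and $a,b\in(0,1]$. For $\sigma:\mathsf V\to Q$, $\eta(\sigma)\subseteq\mathsf E^*$ is the set of $e^*$ whose primal $e$ has endpoints with different $\sigma$-values; for $\sigma':\mathsf U\to Q'$, $\eta(\sigma')\subseteq\mathsf E$ is the set of $e$ whose dual $e^*$ has endpoints with different $\sigma'$-values. $\mathbf P(\sigma,\sigma')\propto a^{|\eta(\sigma')|}b^{|\eta(\sigma)|}$ on $\Sigma=\{(\sigma,\sigma'):\eta(\sigma)^*\cap\eta(\sigma')=\emptyset\}$. Percolation: given $(\sigma,\sigma')$, every edge of $\eta(\sigma')$ and every dual edge of $\eta(\sigma)$ is open; for each pair $(e,e^* )$ with $e\notin\eta(\sigma')$, $e^*\notin\eta(\sigma)$,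 independently: if $a+b\le1$, ($e$ open, $e^*$ closed) w.p. $a$, ($e$ closed, $e^*$ open) w.p. $b$, both open w.p. $1-a-b$; if $a+b\ge1$, ($e$ open, $e^*$ closed) w.p. $1-b$, ($e$ closed, $e^*$ open) w.p. $1-a$, both closed w.p. $a+b-1$. $\omega$ is the set of open primal edges; $\mathbf P$ is the joint law. $k(\omega)$ is the number of connected components of $(\mathsf V,\omega)$, isolated vertices included. For a finite graph $G=(V,E)$ and $x\neq-1$, $Z_{G,q'}(x)=\sum_{s\in Q'^V}(1+x)^{-n(s)}$ where $n(s)$ is the number of edges whose endpoints get different spins (Potts partition function with $e^J=1+x$, possibly with $1+x<0$). *)

theory Defs
  imports Complex_Main "HOL-Combinatorics.Permutations" "HOL-Library.FuncSet"
begin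

text \<open>Combinatorial encoding of a cellularly embedded connected graph on an orientable
surface (combinatorial map): darts D, fixed-point-free involution alpha (edges),
rotation rho (vertices = rho-orbits), faces = orbits of rho o alpha. Genus zero is Euler's formula.\<close>

definition same_orbit :: "('d \<Rightarrow> 'd) \<Rightarrow> 'd \<Rightarrow> 'd \<Rightarrow> bool" where
  "same_orbit f x y \<longleftrightarrow> (\<exists>n. (f ^^ n) x = y)"

definition map_edges :: "'d set \<Rightarrow> ('d \<Rightarrow> 'd) \<Rightarrow> 'd set set" where
  "map_edges D alpha = {{d, alpha d} | d. d \<in> D}"

definition genus0_map ::
  "'d set \<Rightarrow> ('d \<Rightarrow> 'd) \<Rightarrow> ('d \<Rightarrow> 'd) \<Rightarrow> 'v set \<Rightarrow> ('d \<Rightarrow> 'v) \<Rightarrow> 'u set \<Rightarrow> ('d \<Rightarrow> 'u) \<Rightarrow> bool" where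
  "genus0_map D alpha rho V vert U fc \<longleftrightarrow>
     finite D \<and> finite V \<and> finite U \<and>
     alpha permutes D \<and> (\<forall>d\<in>D. alpha d \<noteq> d \<and> alpha (alpha d) = d) \<and>
     rho permutes D \<and>
     (\<forall>d\<in>D. vert d \<in> V \<and> fc d \<in> U) \<and>
     (\<forall>d\<in>D. \<forall>d'\<in>D. vert d = vert d' \<longleftrightarrow> same_orbit rho d d') \<and>
     (\<forall>d\<in>D. \<forall>d'\<in>D. fc d = fc d' \<longleftrightarrow> same_orbit (rho \<circ> alpha) d d') \<and>
     (if D = {} then card V = 1 \<and> card U = 1
      else vert ` D = V \<and> fc ` D = U \<and>
           (\<forall>d\<in>D. \<forall>d'\<in>D. (d, d') \<in> ({(x, alpha x) | x. True} \<union> {(x, rho x) | x. True})\<^sup>*)) \<and>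
     int (card V) - int (card (map_edges D alpha)) + int (card U) = 2"

text \<open>Edges whose two endpoints (under the labelling lab) receive different spins.
With lab = vert this is the set of e whose dual e* lies in eta(sigma);
with lab = fc (faces) it is eta(sigma').\<close>
definition disagree :: "'d set set \<Rightarrow> ('d \<Rightarrow> 'x) \<Rightarrow> ('x \<Rightarrow> complex) \<Rightarrow> 'd set set" where
  "disagree F lab s = {e \<in> F. \<exists>x\<in>e. \<exists>y\<in>e. s (lab x) \<noteq> s (lab y)}"

definition potts_Z :: "'v set \<Rightarrow> 'd set set \<Rightarrow> ('d \<Rightarrow> 'v) \<Rightarrow> complex set \<Rightarrow> real \<Rightarrow> real" where
  "potts_Z V F lab Q' x = (\<Sum>s \<in> V \<rightarrow>\<^sub>E Q'. inverse ((1 + x) ^ card (disagree F lab s)))"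

definition num_components :: "'v set \<Rightarrow> 'd set set \<Rightarrow> ('d \<Rightarrow> 'v) \<Rightarrow> nat" where
  "num_components V w lab =
     card (V // ({(u, v). \<exists>e\<in>w. u \<in> lab ` e \<and> v \<in> lab ` e})\<^sup>*)"

text \<open>Law of the state (e open?, e* open?) of a pair not forced by the spins.\<close>
definition free_pair_prob :: "real \<Rightarrow> real \<Rightarrow> bool \<Rightarrow> bool \<Rightarrow> real" where
  "free_pair_prob a b eo du =
    (if a + b \<le> 1 then
       (if eo \<and> \<not> du then a else if \<not> eo \<and> du then b else if eo \<and> du then 1 - a - b else 0)
     else
       (if eo \<and> \<not> du then 1 - b else if \<not> eo \<and> du then 1 - a else if \<not> eo \<and> \<not> du then a + b - 1 else 0))"

definition spin_configs ::
  "'d set set \<Rightarrow> 'v set \<Rightarrow> ('d \<Rightarrow> 'v) \<Rightarrow> 'u set \<Rightarrow> ('d \<Rightarrow> 'u) \<Rightarrow> complex set \<Rightarrow> complex set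
   \<Rightarrow> (('v \<Rightarrow> complex) \<times> ('u \<Rightarrow> complex)) set" where
  "spin_configs E V vert U fc Q Q' =
     {(s, t). s \<in> V \<rightarrow>\<^sub>E Q \<and> t \<in> U \<rightarrow>\<^sub>E Q' \<and> disagree E vert s \<inter> disagree E fc t = {}}"

definition spin_weight ::
  "'d set set \<Rightarrow> ('d \<Rightarrow> 'v) \<Rightarrow> ('d \<Rightarrow> 'u) \<Rightarrow> real \<Rightarrow> real \<Rightarrow> ('v \<Rightarrow> complex) \<Rightarrow> ('u \<Rightarrow> complex) \<Rightarrow> real" where
  "spin_weight E vert fc a b s t = a ^ card (disagree E fc t) * b ^ card (disagree E vert s)"

text \<open>Conditional probability of (omega, omega-dual) given the spins; omega-dual is
represented by the set of primal edges e whose dual e* is open.\<close>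
definition perc_cond ::
  "'d set set \<Rightarrow> ('d \<Rightarrow> 'v) \<Rightarrow> ('d \<Rightarrow> 'u) \<Rightarrow> real \<Rightarrow> real \<Rightarrow> ('v \<Rightarrow> complex) \<Rightarrow> ('u \<Rightarrow> complex)
   \<Rightarrow> 'd set set \<Rightarrow> 'd set set \<Rightarrow> real" where
  "perc_cond E vert fc a b s t w wd =
     (\<Prod>e\<in>E. if e \<in> disagree E fc t then (if e \<in> w \<and> e \<notin> wd then 1 else 0)
             else if e \<in> disagree E vert s then (if e \<notin> w \<and> e \<in> wd then 1 else 0)
             else free_pair_prob a b (e \<in> w) (e \<in> wd))"

definition omega_marginal ::
  "'d set set \<Rightarrow> 'v set \<Rightarrow> ('d \<Rightarrow> 'v) \<Rightarrow> 'u set \<Rightarrow> ('d \<Rightarrow> 'u) \<Rightarrow> complex set \<Rightarrow> complex set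
   \<Rightarrow> real \<Rightarrow> real \<Rightarrow> 'd set set \<Rightarrow> real" where
  "omega_marginal E V vert U fc Q Q' a b w =
     (\<Sum>(s, t) \<in> spin_configs E V vert U fc Q Q'. \<Sum>wd \<in> Pow E.
        spin_weight E vert fc a b s t * perc_cond E vert fc a b s t w wd)
     / (\<Sum>(s, t) \<in> spin_configs E V vert U fc Q Q'. spin_weight E vert fc a b s t)"

end

theory Submission
  imports Defs
begin

(* Summing out the state of every dual edge, the joint weight of the spins and of omega factorises
   over the edges: an open edge forces the vertex spins to agree across it, and each edge carries a
   weight depending only on whether it is open and whether the face spins agree across it.  The sum
   over vertex spins gives q^k(omega).  The sum over face spins is a random-cluster sum over sets of
   dual edges, and on the sphere a set E - B of dual edges has
   k*(E - B) = 1 + k(B) + |B| - |V| components (Euler's relation for subgraphs, proved with a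
   potential that can only decrease when an edge is added, by tracing the faces around a vertex
   cluster).  This turns the face-spin sum into a random-cluster sum over B contained in omega,
   which is the Fortuin-Kasteleyn expansion of the Potts partition function of (V, omega). *)

section \<open>Connected components of labelled edge sets\<close>

definition edge_rel :: "'d set set \<Rightarrow> ('d \<Rightarrow> 'v) \<Rightarrow> ('v \<times> 'v) set" where
  "edge_rel F lab = {(u, v). \<exists>e\<in>F. u \<in> lab ` e \<and> v \<in> lab ` e}"

lemma num_components_eq_card_quotient:
  "num_components V F lab = card (V // (edge_rel F lab)\<^sup>*)"
  unfolding num_components_def edge_rel_def ..

lemma sym_edge_rel: "sym (edge_rel F lab)"
  by (auto simp: sym_def edge_rel_def)

lemma equiv_rtrancl_edge_rel: "equiv UNIV ((edge_rel F lab)\<^sup>*)"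
  by (simp add: equiv_def refl_rtrancl sym_rtrancl[OF sym_edge_rel] trans_rtrancl)

lemma edge_rel_insert:
  "edge_rel (insert {d, d'} F) lab = edge_rel F lab \<union> {lab d, lab d'} \<times> {lab d, lab d'}"
  by (auto simp: edge_rel_def)

lemma edge_rel_subset: "\<forall>e\<in>F. lab ` e \<subseteq> V \<Longrightarrow> edge_rel F lab \<subseteq> V \<times> V"
  by (auto simp: edge_rel_def)

lemma num_components_empty: "num_components V {} lab = card V"
proof -
  have "V // Id = (\<lambda>x. {x}) ` V" by (auto simp: quotient_def)
  then show ?thesis
    by (simp add: num_components_eq_card_quotient edge_rel_def card_image)
qed

lemma num_components_eq_1:
  assumes "V \<noteq> {}" "\<forall>e\<in>F. lab ` e \<subseteq> V" "\<forall>u\<in>V. \<forall>v\<in>V. (u, v) \<in> (edge_rel F lab)\<^sup>*"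
  shows "num_components V F lab = 1"
proof -
  have "(edge_rel F lab)\<^sup>* `` {u} = V" if "u \<in> V" for u
  proof
    show "(edge_rel F lab)\<^sup>* `` {u} \<subseteq> V"
    proof
      fix v assume "v \<in> (edge_rel F lab)\<^sup>* `` {u}"
      then have "(u, v) \<in> (edge_rel F lab)\<^sup>*" by simp
      then show "v \<in> V"
        by induction (use that edge_rel_subset[OF assms(2)] in auto)
    qed
    show "V \<subseteq> (edge_rel F lab)\<^sup>* `` {u}" using assms(3) that by blast
  qed
  then have "V // (edge_rel F lab)\<^sup>* = {V}"
    using assms(1) unfolding quotient_def by blast
  then show ?thesis by (simp add: num_components_eq_card_quotient)
qed

lemma rtrancl_Un_pair:
  fixes r :: "('a \<times> 'a) set" and x y :: 'a
  assumes "sym r"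
  defines "M \<equiv> r\<^sup>* `` {x} \<union> r\<^sup>* `` {y}"
  shows "(r \<union> {x, y} \<times> {x, y})\<^sup>* = r\<^sup>* \<union> M \<times> M"
proof
  have sym_s: "(u, v) \<in> r\<^sup>* \<Longrightarrow> (v, u) \<in> r\<^sup>*" for u v
    using assms(1) by (meson sym_rtrancl symD)
  have M_closed: "u \<in> M \<Longrightarrow> (u, v) \<in> r\<^sup>* \<Longrightarrow> v \<in> M" for u v
    unfolding M_def by (auto intro: rtrancl_trans)
  have "trans (r\<^sup>* \<union> M \<times> M)"
    by (rule transI) (auto intro: rtrancl_trans M_closed sym_s)
  moreover have "r \<union> {x, y} \<times> {x, y} \<subseteq> r\<^sup>* \<union> M \<times> M" unfolding M_def by auto
  ultimately show "(r \<union> {x, y} \<times> {x, y})\<^sup>* \<subseteq> r\<^sup>* \<union> M \<times> M"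
    by (intro rtrancl_Int_subset) (auto dest: transD)
  have sub: "r\<^sup>* \<subseteq> (r \<union> {x, y} \<times> {x, y})\<^sup>*" by (rule rtrancl_mono) blast
  moreover have "(x, y) \<in> (r \<union> {x, y} \<times> {x, y})\<^sup>*" "(y, x) \<in> (r \<union> {x, y} \<times> {x, y})\<^sup>*" by auto
  ultimately have "M \<times> M \<subseteq> (r \<union> {x, y} \<times> {x, y})\<^sup>*"
    unfolding M_def by (blast intro: rtrancl_trans dest: sym_s)
  with sub show "r\<^sup>* \<union> M \<times> M \<subseteq> (r \<union> {x, y} \<times> {x, y})\<^sup>*" by blast
qed

lemma card_quotient_rtrancl_Un_pair:
  assumes "sym r" "x \<in> V" "y \<in> V" "finite V"
  shows "card (V // (r \<union> {x, y} \<times> {x, y})\<^sup>*) + (if (x, y) \<in> r\<^sup>* then 0 else 1) = card (V // r\<^sup>*)"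
proof -
  let ?s = "r\<^sup>*"
  define M where "M = ?s `` {x} \<union> ?s `` {y}"
  have eq: "equiv UNIV ?s"
    by (simp add: equiv_def refl_rtrancl sym_rtrancl[OF assms(1)] trans_rtrancl)
  have class_eq: "u \<in> ?s `` {v} \<Longrightarrow> ?s `` {u} = ?s `` {v}" for u v
    using eq by (metis Image_singleton_iff equiv_class_eq equivE symD)
  have join: "(r \<union> {x, y} \<times> {x, y})\<^sup>* = ?s \<union> M \<times> M"
    unfolding M_def by (rule rtrancl_Un_pair[OF assms(1)])
  show ?thesis
  proof (cases "(x, y) \<in> ?s")
    case True
    then have "M \<times> M \<subseteq> ?s" unfolding M_def using class_eq by blast
    with True show ?thesis unfolding join by (simp add: Un_absorb2)
  next
    case False
    have "?s `` {u} \<subseteq> M" if "u \<in> M" for u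
      using that class_eq unfolding M_def by blast
    then have classes: "(?s \<union> M \<times> M) `` {u} = (if u \<in> M then M else ?s `` {u})" for u
      by auto
    have "u \<notin> M \<longleftrightarrow> ?s `` {u} \<noteq> ?s `` {x} \<and> ?s `` {u} \<noteq> ?s `` {y}" for u
      unfolding M_def using class_eq by (metis Image_singleton_iff UnCI UnE rtrancl.rtrancl_refl)
    then have "(\<lambda>u. ?s `` {u}) ` (V - M) = V // ?s - {?s `` {x}, ?s `` {y}}"
      unfolding quotient_def by blast
    moreover have "x \<in> M" unfolding M_def by simp
    then have "V // (?s \<union> M \<times> M) = insert M ((\<lambda>u. ?s `` {u}) ` (V - M))"
      using assms(2) unfolding quotient_def classes by (auto split: if_splits)
    ultimately have "V // (?s \<union> M \<times> M) = insert M (V // ?s - {?s `` {x}, ?s `` {y}})" by simp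
    moreover have "M \<notin> V // ?s"
      using False class_eq unfolding M_def quotient_def by blast
    moreover have "?s `` {x} \<noteq> ?s `` {y}"
      using False by (metis Image_singleton_iff rtrancl.rtrancl_refl)
    then have cls: "{?s `` {x}, ?s `` {y}} \<subseteq> V // ?s" "card {?s `` {x}, ?s `` {y}} = 2"
      using assms(2,3) by (auto intro: quotientI)
    moreover have fin: "finite (V // ?s)"
      using assms(4) unfolding quotient_def by simp
    ultimately have "card (V // (?s \<union> M \<times> M)) = Suc (card (V // ?s) - 2)"
      by (simp add: card_Diff_subset finite_subset)
    moreover have "2 \<le> card (V // ?s)"
      using card_mono[OF fin cls(1)] cls(2) by simp
    ultimately show ?thesis
      using False unfolding join by simp
  qed
qed

lemma num_components_insert:
  assumes "finite V" "lab d \<in> V" "lab d' \<in> V"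
  shows "num_components V (insert {d, d'} F) lab
           + (if (lab d, lab d') \<in> (edge_rel F lab)\<^sup>* then 0 else 1) = num_components V F lab"
  unfolding num_components_eq_card_quotient edge_rel_insert
  by (rule card_quotient_rtrancl_Un_pair[OF sym_edge_rel assms(2,3,1)])

section \<open>Colourings and the random-cluster expansion\<close>

definition agrees :: "('d \<Rightarrow> 'x) \<Rightarrow> ('x \<Rightarrow> 'c) \<Rightarrow> 'd set \<Rightarrow> bool" where
  "agrees lab s e \<longleftrightarrow> (\<forall>x\<in>e. \<forall>y\<in>e. s (lab x) = s (lab y))"

lemma disagree_eq: "disagree F lab s = {e \<in> F. \<not> agrees lab s e}"
  unfolding disagree_def agrees_def by blast

lemma prod_of_bool:
  "finite A \<Longrightarrow> (\<Prod>x\<in>A. of_bool (P x)) = (of_bool (\<forall>x\<in>A. P x) :: 'a::comm_semiring_1)"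
  by (induction rule: finite_induct) auto

lemma card_PiE_respecting_equiv:
  assumes "equiv UNIV s" "finite V"
  shows "card {f \<in> V \<rightarrow>\<^sub>E Q. \<forall>u\<in>V. \<forall>v\<in>V. (u, v) \<in> s \<longrightarrow> f u = f v} = card Q ^ card (V // s)"
proof -
  let ?S = "{f \<in> V \<rightarrow>\<^sub>E Q. \<forall>u\<in>V. \<forall>v\<in>V. (u, v) \<in> s \<longrightarrow> f u = f v}"
  define pick where "pick X = (SOME v. v \<in> X \<inter> V)" for X
  have pick: "pick (s `` {v}) \<in> V \<and> (v, pick (s `` {v})) \<in> s" if "v \<in> V" for v
  proof -
    have "v \<in> s `` {v} \<inter> V" using assms(1) that by (auto simp: equiv_def refl_on_def)
    then show ?thesis
      unfolding pick_def by (metis (no_types, lifting) Image_singleton_iff IntE someI)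
  qed
  have class_eq: "(u, v) \<in> s \<Longrightarrow> s `` {u} = s `` {v}" for u v
    using assms(1) by (rule equiv_class_eq)
  define g where "g h = (\<lambda>v\<in>V. h (s `` {v}))" for h :: "'a set \<Rightarrow> 'b"
  define g' where "g' f = (\<lambda>X\<in>V // s. f (pick X))" for f :: "'a \<Rightarrow> 'b"
  have bij: "bij_betw g (V // s \<rightarrow>\<^sub>E Q) ?S"
  proof (rule bij_betwI)
    show "g \<in> (V // s \<rightarrow>\<^sub>E Q) \<rightarrow> ?S"
      unfolding g_def by (auto intro: quotientI dest: class_eq)
    show "g' \<in> ?S \<rightarrow> (V // s \<rightarrow>\<^sub>E Q)"
    proof
      fix f assume "f \<in> ?S"
      then have "f (pick X) \<in> Q" if "X \<in> V // s" for X
        using that pick by (auto elim!: quotientE)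
      then show "g' f \<in> V // s \<rightarrow>\<^sub>E Q" unfolding g'_def by simp
    qed
    show "g' (g h) = h" if h: "h \<in> V // s \<rightarrow>\<^sub>E Q" for h
    proof (rule extensionalityI[of _ "V // s"])
      fix X assume "X \<in> V // s"
      then obtain u where u: "u \<in> V" "X = s `` {u}" by (rule quotientE)
      then have "pick X \<in> V" "s `` {pick X} = X"
        using pick[OF u(1)] class_eq[of u "pick X"] by auto
      with \<open>X \<in> V // s\<close> show "g' (g h) X = h X" unfolding g_def g'_def by simp
    qed (use h in \<open>auto simp: g'_def PiE_iff\<close>)
    show "g (g' f) = f" if f: "f \<in> ?S" for f
    proof (rule extensionalityI[of _ V])
      fix v assume "v \<in> V"
      moreover have "f v = f (pick (s `` {v}))"
        using f pick[OF \<open>v \<in> V\<close>] \<open>v \<in> V\<close> by simp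
      ultimately show "g (g' f) v = f v" unfolding g_def g'_def by (simp add: quotientI)
    qed (use f in \<open>auto simp: g_def PiE_iff\<close>)
  qed
  have "finite (V // s)" using assms(2) by (simp add: quotient_def)
  then show ?thesis using bij_betw_same_card[OF bij] by (simp add: card_PiE)
qed

lemma agrees_rtrancl_edge_rel:
  assumes "\<forall>e\<in>F. agrees lab f e" "(u, v) \<in> (edge_rel F lab)\<^sup>*"
  shows "f u = f v"
  using assms(2) by induction (use assms(1) in \<open>auto simp: edge_rel_def agrees_def\<close>)

lemma card_agreeing_PiE:
  assumes "finite V" "\<forall>e\<in>F. lab ` e \<subseteq> V"
  shows "card {f \<in> V \<rightarrow>\<^sub>E Q. \<forall>e\<in>F. agrees lab f e} = card Q ^ num_components V F lab"
proof -
  have "{f \<in> V \<rightarrow>\<^sub>E Q. \<forall>e\<in>F. agrees lab f e}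
      = {f \<in> V \<rightarrow>\<^sub>E Q. \<forall>u\<in>V. \<forall>v\<in>V. (u, v) \<in> (edge_rel F lab)\<^sup>* \<longrightarrow> f u = f v}"
  proof (intro Collect_cong conj_cong refl iffI)
    show "\<forall>u\<in>V. \<forall>v\<in>V. (u, v) \<in> (edge_rel F lab)\<^sup>* \<longrightarrow> f u = f v"
      if "\<forall>e\<in>F. agrees lab f e" for f
      using agrees_rtrancl_edge_rel[OF that] by blast
    show "\<forall>e\<in>F. agrees lab f e"
      if "\<forall>u\<in>V. \<forall>v\<in>V. (u, v) \<in> (edge_rel F lab)\<^sup>* \<longrightarrow> f u = f v" for f
      using that assms(2) unfolding agrees_def edge_rel_def by (blast intro: r_into_rtrancl)
  qed
  then show ?thesis
    using card_PiE_respecting_equiv[OF equiv_rtrancl_edge_rel assms(1)]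
    by (simp add: num_components_eq_card_quotient)
qed

lemma sum_PiE_of_bool_agrees:
  assumes "finite V" "finite Q" "\<forall>e\<in>F. lab ` e \<subseteq> V"
  shows "(\<Sum>s\<in>V \<rightarrow>\<^sub>E Q. of_bool (\<forall>e\<in>F. agrees lab s e))
       = (of_nat (card Q ^ num_components V F lab) :: 'a::comm_semiring_1)"
proof -
  have "{s \<in> V \<rightarrow>\<^sub>E Q. \<forall>e\<in>F. agrees lab s e} = (V \<rightarrow>\<^sub>E Q) \<inter> {s. \<forall>e\<in>F. agrees lab s e}" by blast
  then show ?thesis
    using card_agreeing_PiE[OF assms(1,3), of Q] assms(1,2) by (simp add: finite_PiE)
qed

lemma random_cluster_expansion:
  fixes f :: "'d set \<Rightarrow> bool \<Rightarrow> 'a::comm_ring_1" and Q :: "'c set"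
  assumes "finite V" "finite Q" "finite F" "\<forall>e\<in>F. lab ` e \<subseteq> V"
  shows "(\<Sum>s\<in>V \<rightarrow>\<^sub>E Q. \<Prod>e\<in>F. f e (agrees lab s e))
       = (\<Sum>A\<in>Pow F. (\<Prod>e\<in>A. f e True - f e False) * (\<Prod>e\<in>F - A. f e False)
                      * of_nat (card Q ^ num_components V A lab))"
proof -
  have expand: "(\<Prod>e\<in>F. f e (agrees lab s e))
      = (\<Sum>A\<in>Pow F. (\<Prod>e\<in>A. f e True - f e False) * (\<Prod>e\<in>F - A. f e False)
                    * of_bool (\<forall>e\<in>A. agrees lab s e))" for s
  proof -
    have "(\<Prod>e\<in>F. f e (agrees lab s e))
        = (\<Prod>e\<in>F. (f e True - f e False) * of_bool (agrees lab s e) + f e False)"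
      by (rule prod.cong) auto
    also have "\<dots> = (\<Sum>A\<in>Pow F. (\<Prod>e\<in>A. (f e True - f e False) * of_bool (agrees lab s e))
                                  * (\<Prod>e\<in>F - A. f e False))"
      by (rule prod_add[OF assms(3)])
    also have "\<dots> = (\<Sum>A\<in>Pow F. (\<Prod>e\<in>A. f e True - f e False) * (\<Prod>e\<in>F - A. f e False)
                                  * of_bool (\<forall>e\<in>A. agrees lab s e))"
      using assms(3)
      by (intro sum.cong refl) (auto simp: prod.distrib prod_of_bool finite_subset mult_ac)
    finally show ?thesis .
  qed
  have count: "(\<Sum>s\<in>V \<rightarrow>\<^sub>E Q. of_bool (\<forall>e\<in>A. agrees lab s e))
      = (of_nat (card Q ^ num_components V A lab) :: 'a)" if "A \<in> Pow F" for A
    using that assms(4) by (intro sum_PiE_of_bool_agrees[OF assms(1,2)]) blast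
  have "(\<Sum>s\<in>V \<rightarrow>\<^sub>E Q. \<Prod>e\<in>F. f e (agrees lab s e))
      = (\<Sum>A\<in>Pow F. \<Sum>s\<in>V \<rightarrow>\<^sub>E Q. (\<Prod>e\<in>A. f e True - f e False) * (\<Prod>e\<in>F - A. f e False)
                      * of_bool (\<forall>e\<in>A. agrees lab s e))"
    unfolding expand by (rule sum.swap)
  then show ?thesis
    by (simp add: sum_distrib_left[symmetric] count)
qed

lemma sum_Pow_binomial:
  assumes "finite w"
  shows "(\<Sum>B\<in>Pow w. u ^ card B * v ^ card (w - B)) = (u + v :: 'a::comm_semiring_1) ^ card w"
  using prod_add[OF assms, of "\<lambda>_. u" "\<lambda>_. v"] by simp

lemma potts_Z_random_cluster:
  assumes "finite V" "finite Q" "finite w" "\<forall>e\<in>w. lab ` e \<subseteq> V"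
  shows "potts_Z V w lab Q x
       = (\<Sum>A\<in>Pow w. (1 - inverse (1 + x)) ^ card A * inverse (1 + x) ^ card (w - A)
                      * real (card Q) ^ num_components V A lab)"
proof -
  have "inverse ((1 + x) ^ card (disagree w lab s))
      = (\<Prod>e\<in>w. if agrees lab s e then 1 else inverse (1 + x))" for s
    using assms(3) by (simp add: power_inverse prod.If_cases disagree_eq Diff_eq Int_def)
  then show ?thesis
    unfolding potts_Z_def
    using random_cluster_expansion[OF assms, of "\<lambda>_ ag. if ag then 1 else inverse (1 + x)"]
    by simp
qed

(* For c + y = 0 the Potts weights are inverse 0 = 0 and the identity survives only for a single
   spin value. *)
lemma random_cluster_eq_potts:
  fixes c y :: real
  assumes "finite V" "finite Q" "finite w" "\<forall>e\<in>w. lab ` e \<subseteq> V"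
    and "c \<noteq> 0" "c + y \<noteq> 0 \<or> card Q = 1"
  shows "(\<Sum>B\<in>Pow w. c ^ card (w - B) * y ^ card B * real (card Q) ^ num_components V B lab)
       = (c + y) ^ card w * potts_Z V w lab Q (y / c)"
proof (cases "card Q = 1")
  case True
  then show ?thesis
    using sum_Pow_binomial[OF assms(3), of y c]
      sum_Pow_binomial[OF assms(3), of "1 - inverse (1 + y / c)"]
    by (simp add: potts_Z_random_cluster[OF assms(1-4)] mult.commute add.commute)
next
  case False
  with assms(6) have cy: "c + y \<noteq> 0" by simp
  have p: "inverse (1 + y / c) = c / (c + y)" "1 - c / (c + y) = y / (c + y)"
    using assms(5) cy by (simp_all add: field_simps)
  have "(c + y) ^ card w * ((y / (c + y)) ^ card B * (c / (c + y)) ^ card (w - B))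
      = c ^ card (w - B) * y ^ card B" if "B \<in> Pow w" for B
  proof -
    have "card w = card B + card (w - B)"
      using that assms(3) by (simp add: card_Diff_subset card_mono finite_subset)
    then show ?thesis using cy by (simp add: power_add power_divide field_simps)
  qed
  then show ?thesis
    unfolding potts_Z_random_cluster[OF assms(1-4)] p sum_distrib_left
    by (intro sum.cong refl) (simp add: mult.assoc[symmetric])
qed

section \<open>Euler's relation for subgraphs of a planar map\<close>

lemma funpow_return_inj_on:
  assumes "finite X" "inj_on f X" "\<And>x. x \<in> X \<Longrightarrow> f x \<in> X" "x \<in> X"
  obtains n where "0 < n" "(f ^^ n) x = x"
proof -
  define g where "g y = (if y \<in> X then f y else y)" for y
  have g_X: "y \<in> X \<Longrightarrow> (g ^^ k) y \<in> X \<and> (g ^^ k) y = (f ^^ k) y" for y k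
    by (induction k) (auto simp: g_def assms(3))
  have "inj g"
  proof (rule injI)
    fix u v assume "g u = g v"
    then show "u = v"
      using assms(3) inj_onD[OF assms(2)] unfolding g_def by (auto split: if_splits)
  qed
  moreover have "finite {y. \<exists>k. y = (g ^^ k) x}"
    using g_X[OF assms(4)] by (intro finite_subset[OF _ assms(1)]) blast
  ultimately obtain n where "0 < n" "(g ^^ n) x = x" by (rule funpow_inj_finite)
  with g_X[OF assms(4)] that show ?thesis by metis
qed

lemma funpow_cycle_invariant:
  assumes "(f ^^ n) x = x" "0 < n" "P (f x)" "\<And>z. P z \<Longrightarrow> z \<noteq> x \<Longrightarrow> P (f z)"
  shows "P x"
proof (rule ccontr)
  assume "\<not> P x"
  have "P ((f ^^ i) (f x))" for i
  proof (induction i)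
    case 0
    show ?case using assms(3) by simp
  next
    case (Suc i)
    then have "(f ^^ i) (f x) \<noteq> x" using \<open>\<not> P x\<close> by auto
    with Suc show ?case using assms(4) by simp
  qed
  moreover obtain m where "n = Suc m" using assms(2) gr0_implies_Suc by blast
  then have "(f ^^ m) (f x) = x" using assms(1) by (simp add: funpow_Suc_right del: funpow.simps)
  ultimately show False using \<open>\<not> P x\<close> by metis
qed

locale planar_map =
  fixes D :: "'d set" and alpha rho :: "'d \<Rightarrow> 'd"
    and V :: "'v set" and vert :: "'d \<Rightarrow> 'v" and U :: "'u set" and fc :: "'d \<Rightarrow> 'u"
  assumes genus0: "genus0_map D alpha rho V vert U fc"
begin

abbreviation E where "E \<equiv> map_edges D alpha"

lemma finite_darts: "finite D" and finite_vertices: "finite V" and finite_faces: "finite U"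
  using genus0 unfolding genus0_map_def by auto

lemma alpha_in: "x \<in> D \<Longrightarrow> alpha x \<in> D"
  using genus0 unfolding genus0_map_def by (meson permutes_in_image)

lemma rho_in: "x \<in> D \<Longrightarrow> rho x \<in> D"
  using genus0 unfolding genus0_map_def by (meson permutes_in_image)

lemma alpha_alpha: "x \<in> D \<Longrightarrow> alpha (alpha x) = x"
  using genus0 unfolding genus0_map_def by auto

lemma inj_alpha: "inj alpha" and inj_rho: "inj rho"
  using genus0 unfolding genus0_map_def by (auto intro: permutes_inj)

lemma vert_in: "x \<in> D \<Longrightarrow> vert x \<in> V" and fc_in: "x \<in> D \<Longrightarrow> fc x \<in> U"
  using genus0 unfolding genus0_map_def by auto

lemma vert_rho: "x \<in> D \<Longrightarrow> vert (rho x) = vert x"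
proof -
  assume x: "x \<in> D"
  have "same_orbit rho x (rho x)" unfolding same_orbit_def by (rule exI[of _ 1]) simp
  then show ?thesis using genus0 x rho_in[OF x] unfolding genus0_map_def by metis
qed

lemma fc_rho_alpha: "x \<in> D \<Longrightarrow> fc (rho (alpha x)) = fc x"
proof -
  assume x: "x \<in> D"
  have "same_orbit (rho \<circ> alpha) x (rho (alpha x))"
    unfolding same_orbit_def by (rule exI[of _ 1]) simp
  then show ?thesis using genus0 x rho_in[OF alpha_in[OF x]] unfolding genus0_map_def by metis
qed

lemma fc_rho: "x \<in> D \<Longrightarrow> fc (rho x) = fc (alpha x)"
  using fc_rho_alpha[OF alpha_in] alpha_alpha by metis

lemma edges_iff: "e \<in> E \<longleftrightarrow> (\<exists>d\<in>D. e = {d, alpha d})"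
  unfolding map_edges_def by auto

lemma finite_edges: "finite E"
  unfolding map_edges_def using finite_darts by simp

lemma edges_vert_subset: "\<forall>e\<in>E. vert ` e \<subseteq> V" and edges_fc_subset: "\<forall>e\<in>E. fc ` e \<subseteq> U"
  using edges_iff vert_in fc_in alpha_in by auto

lemma edge_rel_edges: "d \<in> D \<Longrightarrow> (lab d, lab (alpha d)) \<in> edge_rel E lab"
proof -
  assume "d \<in> D"
  then have "{d, alpha d} \<in> E" unfolding edges_iff by blast
  then show ?thesis unfolding edge_rel_def by blast
qed

lemma dart_labels_connected:
  assumes "\<forall>x\<in>D. (lab x, lab (rho x)) \<in> (edge_rel E lab)\<^sup>*" "d \<in> D" "d' \<in> D"
  shows "(lab d, lab d') \<in> (edge_rel E lab)\<^sup>*"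
proof -
  have "D \<noteq> {}" using assms(2) by blast
  with genus0 assms(2,3)
  have "(d, d') \<in> ({(x, alpha x) | x. True} \<union> {(x, rho x) | x. True})\<^sup>*"
    unfolding genus0_map_def by simp
  then have "d' \<in> D \<and> (lab d, lab d') \<in> (edge_rel E lab)\<^sup>*"
  proof induction
    case (step y z)
    then have y: "y \<in> D" "(lab d, lab y) \<in> (edge_rel E lab)\<^sup>*" by simp_all
    from step.hyps(2) have "z = alpha y \<or> z = rho y" by blast
    then have "z \<in> D \<and> (lab y, lab z) \<in> (edge_rel E lab)\<^sup>*"
      using y(1) assms(1) edge_rel_edges[of y lab] alpha_in rho_in by auto
    with y(2) show ?case by (meson rtrancl_trans)
  qed (use assms(2) in simp)
  then show ?thesis ..
qed

lemma num_components_vertices: "num_components V E vert = 1"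
proof (cases "D = {}")
  case True
  then show ?thesis
    using genus0 unfolding genus0_map_def by (simp add: map_edges_def num_components_empty)
next
  case False
  have "V = vert ` D" using genus0 False unfolding genus0_map_def by auto
  then show ?thesis
    using False edges_vert_subset dart_labels_connected[of vert] vert_rho
    by (intro num_components_eq_1) auto
qed

lemma num_components_faces: "num_components U E fc = 1"
proof (cases "D = {}")
  case True
  then show ?thesis
    using genus0 unfolding genus0_map_def by (simp add: map_edges_def num_components_empty)
next
  case False
  have "U = fc ` D" using genus0 False unfolding genus0_map_def by auto
  moreover have "\<forall>x\<in>D. (fc x, fc (rho x)) \<in> (edge_rel E fc)\<^sup>*"
    using edge_rel_edges fc_rho by auto
  ultimately show ?thesis
    using False edges_fc_subset dart_labels_connected[of fc]
    by (intro num_components_eq_1) auto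
qed

(* The successor of a dart on the boundary walk of a dart set X: the face permutation rho o alpha,
   except that an edge leaving X is not crossed. *)
definition boundary_succ :: "'d set \<Rightarrow> 'd \<Rightarrow> 'd" where
  "boundary_succ X x = (if alpha x \<in> X then rho (alpha x) else rho x)"

lemma inj_on_boundary_succ:
  assumes "X \<subseteq> D"
  shows "inj_on (boundary_succ X) X"
proof (rule inj_onI)
  fix x y assume xy: "x \<in> X" "y \<in> X" "boundary_succ X x = boundary_succ X y"
  then have "x \<in> D" "y \<in> D" using assms by auto
  with xy show "x = y"
    unfolding boundary_succ_def using inj_alpha inj_rho alpha_alpha
    by (auto split: if_splits dest: injD)
qed

lemma fc_boundary_succ:
  "x \<in> D \<Longrightarrow> fc (boundary_succ X x) = (if alpha x \<in> X then fc x else fc (alpha x))"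
  unfolding boundary_succ_def using fc_rho_alpha fc_rho by simp

(* Walking along the boundary of the cluster of vert d, from d back to d, passes from the face
   of alpha d to the face of d through edges leaving the cluster, all different from {d, alpha d}. *)
lemma face_tracing:
  assumes d: "d \<in> D" "{d, alpha d} \<notin> A"
    and split: "(vert d, vert (alpha d)) \<notin> (edge_rel A vert)\<^sup>*"
  shows "(fc d, fc (alpha d)) \<in> (edge_rel (E - insert {d, alpha d} A) fc)\<^sup>*"
proof -
  define X where "X = {x \<in> D. (vert d, vert x) \<in> (edge_rel A vert)\<^sup>*}"
  let ?tau = "boundary_succ X" and ?R = "edge_rel (E - insert {d, alpha d} A) fc"
  have dX: "d \<in> X" and adX: "alpha d \<notin> X" using d split unfolding X_def by auto
  have tau_X: "?tau x \<in> X" if "x \<in> X" for x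
    using that rho_in vert_rho alpha_in unfolding X_def boundary_succ_def by auto
  have "X \<subseteq> D" "finite X" unfolding X_def using finite_darts by auto
  then obtain n where n: "0 < n" "(?tau ^^ n) d = d"
    using inj_on_boundary_succ tau_X dX by (metis funpow_return_inj_on)
  have boundary_step: "(fc z, fc (?tau z)) \<in> ?R\<^sup>*" if z: "z \<in> X" "z \<noteq> d" for z
  proof (cases "alpha z \<in> X")
    case False
    have "z \<in> D" using z unfolding X_def by simp
    then have "{z, alpha z} \<in> E" unfolding edges_iff by blast
    moreover have "{z, alpha z} \<notin> A"
    proof
      assume "{z, alpha z} \<in> A"
      then have "(vert z, vert (alpha z)) \<in> edge_rel A vert" unfolding edge_rel_def by blast
      with z(1) have "alpha z \<in> X"
        unfolding X_def using alpha_in by (auto intro: rtrancl_into_rtrancl)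
      with False show False by contradiction
    qed
    moreover have "{z, alpha z} \<noteq> {d, alpha d}"
      using z adX by (metis doubleton_eq_iff)
    ultimately have "(fc z, fc (alpha z)) \<in> ?R" unfolding edge_rel_def by blast
    then show ?thesis using False \<open>z \<in> D\<close> fc_boundary_succ by auto
  qed (use z \<open>X \<subseteq> D\<close> fc_boundary_succ in auto)
  have "d \<in> X \<and> (fc (alpha d), fc d) \<in> ?R\<^sup>*"
  proof (rule funpow_cycle_invariant[where P = "\<lambda>z. z \<in> X \<and> (fc (alpha d), fc z) \<in> ?R\<^sup>*",
                                      OF n(2,1)])
    show "?tau d \<in> X \<and> (fc (alpha d), fc (?tau d)) \<in> ?R\<^sup>*"
      using dX adX tau_X fc_boundary_succ[OF d(1)] by simp
    show "?tau z \<in> X \<and> (fc (alpha d), fc (?tau z)) \<in> ?R\<^sup>*"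
      if "z \<in> X \<and> (fc (alpha d), fc z) \<in> ?R\<^sup>*" "z \<noteq> d" for z
      using that tau_X boundary_step by (meson rtrancl_trans)
  qed
  then show ?thesis using sym_rtrancl[OF sym_edge_rel] by (meson symD)
qed

definition euler_defect :: "'d set set \<Rightarrow> int" where
  "euler_defect A = int (num_components U (E - A) fc) + int (card V) - 1
                      - int (num_components V A vert) - int (card A)"

lemma euler_defect_insert_le:
  assumes "A \<subseteq> E" "e \<in> E" "e \<notin> A"
  shows "euler_defect (insert e A) \<le> euler_defect A"
proof -
  obtain d where d: "d \<in> D" "e = {d, alpha d}" using assms(2) edges_iff by blast
  let ?F = "E - insert e A"
  have "E - A = insert e ?F" using assms(2,3) by blast
  then have faces: "num_components U (E - A) fc
      + (if (fc d, fc (alpha d)) \<in> (edge_rel ?F fc)\<^sup>* then 0 else 1) = num_components U ?F fc"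
    using d(2) num_components_insert[where lab = fc and F = ?F,
        OF finite_faces fc_in[OF d(1)] fc_in[OF alpha_in[OF d(1)]]] by simp
  have vertices: "num_components V (insert e A) vert
      + (if (vert d, vert (alpha d)) \<in> (edge_rel A vert)\<^sup>* then 0 else 1) = num_components V A vert"
    using d(2) num_components_insert[where lab = vert and F = A,
        OF finite_vertices vert_in[OF d(1)] vert_in[OF alpha_in[OF d(1)]]] by simp
  have "(vert d, vert (alpha d)) \<notin> (edge_rel A vert)\<^sup>* \<Longrightarrow> (fc d, fc (alpha d)) \<in> (edge_rel ?F fc)\<^sup>*"
    using face_tracing[OF d(1)] assms(3) d(2) by simp
  moreover have "card (insert e A) = card A + 1"
    using assms finite_subset[OF assms(1) finite_edges] by simp
  ultimately show ?thesis
    using faces vertices unfolding euler_defect_def by (simp split: if_splits)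
qed

lemma euler_defect_antimono:
  assumes "A \<subseteq> B" "B \<subseteq> E"
  shows "euler_defect B \<le> euler_defect A"
proof -
  have step: "euler_defect (A \<union> C) \<le> euler_defect A" if "finite C" "C \<subseteq> E" for C
    using that
  proof (induction C rule: finite_induct)
    case (insert c C)
    show ?case
    proof (cases "c \<in> A")
      case False
      then have "euler_defect (insert c (A \<union> C)) \<le> euler_defect (A \<union> C)"
        using insert assms by (intro euler_defect_insert_le) auto
      with insert show ?thesis by simp
    qed (use insert in \<open>simp add: insert_absorb\<close>)
  qed simp
  have "finite (B - A)" "B - A \<subseteq> E" using assms finite_edges by (auto intro: finite_subset)
  moreover have "A \<union> (B - A) = B" using assms(1) by blast
  ultimately show ?thesis using step by metis
qed

lemma euler_defect_empty: "euler_defect {} = 0"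
  using num_components_faces by (simp add: euler_defect_def num_components_empty)

lemma euler_defect_edges: "euler_defect E = 0"
  using genus0 num_components_vertices unfolding genus0_map_def euler_defect_def
  by (simp add: num_components_empty)

lemma euler_relation:
  assumes "A \<subseteq> E"
  shows "num_components U (E - A) fc + card V = 1 + num_components V A vert + card A"
proof -
  have "euler_defect A = 0"
    using euler_defect_antimono[OF empty_subsetI assms] euler_defect_antimono[OF assms order_refl]
      euler_defect_empty euler_defect_edges by simp
  then show ?thesis unfolding euler_defect_def by simp
qed

end

section \<open>Summing out the dual edges and the spins\<close>

lemma sum_Pow_prod_mem:
  assumes "finite E"
  shows "(\<Sum>X\<in>Pow E. \<Prod>e\<in>E. G e (e \<in> X)) = (\<Prod>e\<in>E. G e True + G e False :: 'a::comm_semiring_1)"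
proof -
  have "(\<Prod>e\<in>E. G e (e \<in> X)) = (\<Prod>e\<in>X. G e True) * (\<Prod>e\<in>E - X. G e False)" if "X \<subseteq> E" for X
  proof -
    have "(\<Prod>e\<in>E. G e (e \<in> X)) = (\<Prod>e\<in>X. G e (e \<in> X)) * (\<Prod>e\<in>E - X. G e (e \<in> X))"
      using prod.subset_diff[OF that assms, of "\<lambda>e. G e (e \<in> X)"] by (simp only: mult.commute)
    also have "(\<Prod>e\<in>X. G e (e \<in> X)) = (\<Prod>e\<in>X. G e True)" by (rule prod.cong) auto
    also have "(\<Prod>e\<in>E - X. G e (e \<in> X)) = (\<Prod>e\<in>E - X. G e False)" by (rule prod.cong) auto
    finally show ?thesis .
  qed
  then show ?thesis by (simp add: prod_add[OF assms])
qed

(* What is left of the weight of an edge e after absorbing its factors a, b of the spin weight and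
   summing over the state of e*: eo says whether e is open, ag whether the face spins agree
   across e. *)
definition dual_weight :: "real \<Rightarrow> real \<Rightarrow> bool \<Rightarrow> bool \<Rightarrow> real" where
  "dual_weight a b eo ag = (if eo then if ag then 1 - b else a else if ag then b else 0)"

lemma sum_pair_states:
  assumes "\<not> (dt \<and> ds)"
  shows "(if dt then a else 1) * (if ds then b else 1) *
           (\<Sum>du\<in>{True, False}. if dt then (if eo \<and> \<not> du then 1 else 0)
                                 else if ds then (if \<not> eo \<and> du then 1 else 0)
                                 else free_pair_prob a b eo du)
         = of_bool (eo \<longrightarrow> \<not> ds) * dual_weight a b eo (\<not> dt)"
  using assms by (cases dt; cases ds; cases eo) (auto simp: free_pair_prob_def dual_weight_def)

lemma sum_dual_configs:
  assumes "finite E" "disagree E vert s \<inter> disagree E fc t = {}"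
  shows "(\<Sum>wd\<in>Pow E. spin_weight E vert fc a b s t * perc_cond E vert fc a b s t w wd)
       = (\<Prod>e\<in>E. of_bool (e \<in> w \<longrightarrow> agrees vert s e) * dual_weight a b (e \<in> w) (agrees fc t e))"
proof -
  define G where "G e du = (if e \<in> disagree E fc t then (if e \<in> w \<and> \<not> du then 1 else 0)
             else if e \<in> disagree E vert s then (if e \<notin> w \<and> du then 1 else 0)
             else free_pair_prob a b (e \<in> w) du)" for e du
  have "spin_weight E vert fc a b s t
      = (\<Prod>e\<in>E. (if e \<in> disagree E fc t then a else 1) * (if e \<in> disagree E vert s then b else 1))"
    using assms(1) by (simp add: spin_weight_def prod.distrib prod.If_cases Int_def disagree_def)
  moreover have "perc_cond E vert fc a b s t w wd = (\<Prod>e\<in>E. G e (e \<in> wd))" for wd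
    unfolding perc_cond_def G_def by simp
  ultimately have "(\<Sum>wd\<in>Pow E. spin_weight E vert fc a b s t * perc_cond E vert fc a b s t w wd)
      = (\<Prod>e\<in>E. (if e \<in> disagree E fc t then a else 1) * (if e \<in> disagree E vert s then b else 1)
                  * (G e True + G e False))"
    by (simp add: sum_distrib_left[symmetric] sum_Pow_prod_mem[OF assms(1)] prod.distrib)
  also have "\<dots> = (\<Prod>e\<in>E. of_bool (e \<in> w \<longrightarrow> agrees vert s e)
                          * dual_weight a b (e \<in> w) (agrees fc t e))"
  proof (rule prod.cong[OF refl])
    fix e assume "e \<in> E"
    then have "agrees vert s e \<longleftrightarrow> e \<notin> disagree E vert s" "agrees fc t e \<longleftrightarrow> e \<notin> disagree E fc t"
      by (simp_all add: disagree_eq)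
    then show "(if e \<in> disagree E fc t then a else 1) * (if e \<in> disagree E vert s then b else 1)
                 * (G e True + G e False)
             = of_bool (e \<in> w \<longrightarrow> agrees vert s e) * dual_weight a b (e \<in> w) (agrees fc t e)"
      using sum_pair_states[of "e \<in> disagree E fc t" "e \<in> disagree E vert s" a b "e \<in> w"] assms(2)
      unfolding G_def by auto
  qed
  finally show ?thesis .
qed

lemma marginal_numerator_factor:
  fixes V :: "'v set" and U :: "'u set"
  assumes "finite E" "finite V" "finite U" "finite Q" "finite Q'"
  shows "(\<Sum>(s, t)\<in>spin_configs E V vert U fc Q Q'. \<Sum>wd\<in>Pow E.
            spin_weight E vert fc a b s t * perc_cond E vert fc a b s t w wd)
       = (\<Sum>s\<in>V \<rightarrow>\<^sub>E Q. \<Prod>e\<in>E. of_bool (e \<in> w \<longrightarrow> agrees vert s e))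
         * (\<Sum>t\<in>U \<rightarrow>\<^sub>E Q'. \<Prod>e\<in>E. dual_weight a b (e \<in> w) (agrees fc t e))"
proof -
  define h where "h s t = (\<Prod>e\<in>E. of_bool (e \<in> w \<longrightarrow> agrees vert s e)
                                  * dual_weight a b (e \<in> w) (agrees fc t e))"
    for s :: "'v \<Rightarrow> complex" and t :: "'u \<Rightarrow> complex"
  have vanish: "h s t = 0" if "(s, t) \<notin> spin_configs E V vert U fc Q Q'"
    "s \<in> V \<rightarrow>\<^sub>E Q" "t \<in> U \<rightarrow>\<^sub>E Q'" for s t
  proof -
    from that obtain e where "e \<in> disagree E vert s" "e \<in> disagree E fc t"
      unfolding spin_configs_def by auto
    then show ?thesis
      unfolding h_def using assms(1) by (intro prod_zero) (auto simp: disagree_eq dual_weight_def)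
  qed
  have "(\<Sum>(s, t)\<in>spin_configs E V vert U fc Q Q'. \<Sum>wd\<in>Pow E.
          spin_weight E vert fc a b s t * perc_cond E vert fc a b s t w wd)
      = (\<Sum>(s, t)\<in>spin_configs E V vert U fc Q Q'. h s t)"
    unfolding h_def using assms(1)
    by (intro sum.cong refl) (auto simp: spin_configs_def sum_dual_configs)
  also have "\<dots> = (\<Sum>(s, t)\<in>(V \<rightarrow>\<^sub>E Q) \<times> (U \<rightarrow>\<^sub>E Q'). h s t)"
    using assms(2-5) vanish
    by (intro sum.mono_neutral_left) (auto simp: spin_configs_def finite_PiE)
  also have "\<dots> = (\<Sum>s\<in>V \<rightarrow>\<^sub>E Q. \<Prod>e\<in>E. of_bool (e \<in> w \<longrightarrow> agrees vert s e))
                  * (\<Sum>t\<in>U \<rightarrow>\<^sub>E Q'. \<Prod>e\<in>E. dual_weight a b (e \<in> w) (agrees fc t e))"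
    unfolding h_def sum.cartesian_product[symmetric] by (simp add: prod.distrib sum_product)
  finally show ?thesis .
qed

context planar_map
begin

lemma primal_factor:
  fixes Q :: "'c set"
  assumes "w \<subseteq> E" "finite Q"
  shows "(\<Sum>s\<in>V \<rightarrow>\<^sub>E Q. \<Prod>e\<in>E. of_bool (e \<in> w \<longrightarrow> agrees vert s e))
       = real (card Q) ^ num_components V w vert"
proof -
  have "(\<Prod>e\<in>E. of_bool (e \<in> w \<longrightarrow> agrees vert s e)) = (of_bool (\<forall>e\<in>w. agrees vert s e) :: real)"
    for s :: "'v \<Rightarrow> 'c"
    using assms(1) by (simp add: prod_of_bool finite_edges) blast
  moreover have "\<forall>e\<in>w. vert ` e \<subseteq> V" using edges_vert_subset assms(1) by blast
  ultimately show ?thesis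
    using sum_PiE_of_bool_agrees[OF finite_vertices assms(2), of w vert] by simp
qed

lemma dual_random_cluster:
  fixes Q' :: "'c set"
  assumes w: "w \<subseteq> E" and "finite Q'"
  shows "(\<Sum>t\<in>U \<rightarrow>\<^sub>E Q'. \<Prod>e\<in>E. dual_weight a b (e \<in> w) (agrees fc t e))
       = (\<Sum>B\<in>Pow w. b ^ card (E - w) * (1 - a - b) ^ card (w - B) * a ^ card B
                       * real (card Q') ^ num_components U (E - B) fc)"
proof -
  let ?q = "real (card Q')"
  define f where "f e = dual_weight a b (e \<in> w)" for e
  have "(\<Sum>t\<in>U \<rightarrow>\<^sub>E Q'. \<Prod>e\<in>E. f e (agrees fc t e))
      = (\<Sum>A\<in>Pow E. (\<Prod>e\<in>A. f e True - f e False) * (\<Prod>e\<in>E - A. f e False)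
                     * ?q ^ num_components U A fc)"
    using random_cluster_expansion[OF finite_faces assms(2) finite_edges edges_fc_subset, of f]
    by simp
  also have "\<dots> = (\<Sum>B\<in>Pow E. (\<Prod>e\<in>E - B. f e True - f e False) * (\<Prod>e\<in>B. f e False)
                     * ?q ^ num_components U (E - B) fc)"
    by (rule sum.reindex_bij_witness[of _ "\<lambda>B. E - B" "\<lambda>B. E - B"]) (auto simp: double_diff)
  also have "\<dots> = (\<Sum>B\<in>Pow w. (\<Prod>e\<in>E - B. f e True - f e False) * (\<Prod>e\<in>B. f e False)
                     * ?q ^ num_components U (E - B) fc)"
  proof (rule sum.mono_neutral_right)
    show "\<forall>B\<in>Pow E - Pow w. (\<Prod>e\<in>E - B. f e True - f e False) * (\<Prod>e\<in>B. f e False)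
                              * ?q ^ num_components U (E - B) fc = 0"
      using finite_edges by (auto simp: f_def dual_weight_def finite_subset intro!: prod_zero)
  qed (use w finite_edges in auto)
  also have "\<dots> = (\<Sum>B\<in>Pow w. b ^ card (E - w) * (1 - a - b) ^ card (w - B) * a ^ card B
                     * ?q ^ num_components U (E - B) fc)"
  proof (rule sum.cong[OF refl])
    fix B assume "B \<in> Pow w"
    then have "E - B = (E - w) \<union> (w - B)" "(E - w) \<inter> (w - B) = {}" using w by auto
    then have "(\<Prod>e\<in>E - B. f e True - f e False) = b ^ card (E - w) * (1 - a - b) ^ card (w - B)"
      using finite_edges finite_subset[OF w finite_edges]
      by (simp add: prod.union_disjoint f_def dual_weight_def diff_diff_eq add.commute)
    moreover have "(\<Prod>e\<in>B. f e False) = a ^ card B"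
      using \<open>B \<in> Pow w\<close> by (simp add: f_def dual_weight_def subset_iff cong: prod.cong)
    ultimately show "(\<Prod>e\<in>E - B. f e True - f e False) * (\<Prod>e\<in>B. f e False)
                       * ?q ^ num_components U (E - B) fc
        = b ^ card (E - w) * (1 - a - b) ^ card (w - B) * a ^ card B
            * ?q ^ num_components U (E - B) fc"
      by simp
  qed
  finally show ?thesis unfolding f_def .
qed

lemma dual_factor:
  fixes Q' :: "'c set"
  assumes w: "w \<subseteq> E" and "finite Q'"
  shows "real (card Q') ^ card V * (\<Sum>t\<in>U \<rightarrow>\<^sub>E Q'. \<Prod>e\<in>E. dual_weight a b (e \<in> w) (agrees fc t e))
       = real (card Q') * b ^ card (E - w)
         * (\<Sum>B\<in>Pow w. (1 - a - b) ^ card (w - B) * (real (card Q') * a) ^ card B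
                         * real (card Q') ^ num_components V B vert)"
proof -
  let ?q = "real (card Q')"
  have "?q ^ card V * ?q ^ num_components U (E - B) fc
      = ?q * ?q ^ card B * ?q ^ num_components V B vert"
    if "B \<in> Pow w" for B
  proof -
    have "card V + num_components U (E - B) fc = 1 + card B + num_components V B vert"
      using euler_relation[of B] that w by (simp add: add_ac)
    then show ?thesis by (metis power_add power_one_right)
  qed
  then show ?thesis
    unfolding dual_random_cluster[OF assms] sum_distrib_left
    by (intro sum.cong refl) (simp add: power_mult_distrib mult_ac)
qed

lemma dual_factor_eq_potts:
  assumes w: "w \<subseteq> E"
    and "finite Q'" "Q' \<noteq> {}" "0 < a" "0 < b" "b \<le> 1" "a + b \<noteq> 1"
  shows "(\<Sum>t\<in>U \<rightarrow>\<^sub>E Q'. \<Prod>e\<in>E. dual_weight a b (e \<in> w) (agrees fc t e))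
       = real (card Q') * b ^ card E / real (card Q') ^ card V
         * (((1 - (1 - real (card Q')) * a - b) / b) ^ card w
            * potts_Z V w vert Q' (real (card Q') * a / (1 - a - b)))"
proof -
  let ?q = "real (card Q')"
  define y where "y = (1 - (1 - ?q) * a - b) / b"
  define Z where "Z = potts_Z V w vert Q' (?q * a / (1 - a - b))"
  define T where "T = (\<Sum>t\<in>U \<rightarrow>\<^sub>E Q'. \<Prod>e\<in>E. dual_weight a b (e \<in> w) (agrees fc t e))"
  have q: "1 \<le> ?q" using assms(2,3) by (simp add: Suc_leI card_gt_0_iff)
  have nondegenerate: "(1 - a - b) + ?q * a \<noteq> 0 \<or> card Q' = 1"
  proof (cases "card Q' = 1")
    case False
    moreover have "card Q' \<noteq> 0" using assms(2,3) by simp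
    ultimately have "0 < (?q - 1) * a" using assms(4) by simp
    with assms(6) show ?thesis by (simp add: algebra_simps)
  qed simp
  have "finite w" using w finite_edges by (rule finite_subset)
  moreover have "\<forall>e\<in>w. vert ` e \<subseteq> V" using w edges_vert_subset by blast
  moreover have "1 - a - b \<noteq> 0" using assms(7) by simp
  ultimately have "(\<Sum>B\<in>Pow w. (1 - a - b) ^ card (w - B) * (?q * a) ^ card B
                                 * ?q ^ num_components V B vert)
      = ((1 - a - b) + ?q * a) ^ card w * Z"
    unfolding Z_def
    by (rule random_cluster_eq_potts[OF finite_vertices assms(2) _ _ _ nondegenerate])
  then have "?q ^ card V * T = ?q * b ^ card (E - w) * ((1 - a - b) + ?q * a) ^ card w * Z"
    unfolding T_def dual_factor[OF w assms(2)] by (simp add: mult.assoc)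
  also have "(1 - a - b) + ?q * a = b * y" using assms(5) unfolding y_def by (simp add: field_simps)
  also have "?q * b ^ card (E - w) * (b * y) ^ card w * Z = ?q * b ^ card E * (y ^ card w * Z)"
  proof -
    have "card E = card (E - w) + card w"
      using w finite_edges by (simp add: card_Diff_subset card_mono finite_subset)
    then show ?thesis by (simp only: power_mult_distrib power_add mult_ac)
  qed
  finally have "T = ?q * b ^ card E / ?q ^ card V * (y ^ card w * Z)"
    using q by (simp add: field_simps)
  then show ?thesis unfolding T_def y_def Z_def .
qed

end

theorem proposition3p3:
  fixes D :: "'d set" and alpha rho :: "'d \<Rightarrow> 'd"
    and V :: "'v set" and vert :: "'d \<Rightarrow> 'v" and U :: "'u set" and fc :: "'d \<Rightarrow> 'u"
    and Q Q' :: "complex set" and a b :: real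
  assumes map: "genus0_map D alpha rho V vert U fc"
    and "finite Q" "Q \<noteq> {}" "uminus ` Q = Q"
    and "finite Q'" "Q' \<noteq> {}" "uminus ` Q' = Q'"
    and "0 < a" "a \<le> 1" "0 < b" "b \<le> 1" "a + b \<noteq> 1"
  shows "\<exists>c. \<forall>w \<subseteq> map_edges D alpha.
     omega_marginal (map_edges D alpha) V vert U fc Q Q' a b w =
       c * (real (card Q) ^ num_components V w vert
            * ((1 - (1 - real (card Q')) * a - b) / b) ^ card w
            * potts_Z V w vert Q' (real (card Q') * a / (1 - a - b)))"
proof -
  interpret planar_map D alpha rho V vert U fc by (rule planar_map.intro[OF map])
  define Den where "Den = (\<Sum>(s, t)\<in>spin_configs E V vert U fc Q Q'. spin_weight E vert fc a b s t)"
  show ?thesis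
  proof (intro exI allI impI)
    fix w assume w: "w \<subseteq> E"
    show "omega_marginal E V vert U fc Q Q' a b w
        = real (card Q') * b ^ card E / real (card Q') ^ card V / Den
          * (real (card Q) ^ num_components V w vert
             * ((1 - (1 - real (card Q')) * a - b) / b) ^ card w
             * potts_Z V w vert Q' (real (card Q') * a / (1 - a - b)))"
      unfolding omega_marginal_def Den_def[symmetric]
        marginal_numerator_factor[OF finite_edges finite_vertices finite_faces assms(2,5)]
        primal_factor[OF w assms(2)] dual_factor_eq_potts[OF w assms(5,6,8,10,11,12)]
      by (simp only: divide_inverse mult_ac)
  qed
qed

end
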